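(* Let $T>0$ and let $u$ be a bounded weak solution with finite entropy production of $u_t+(u^2/2)_x=0$ on $[0,T]\times\mathbb{R}$, taking values in $[0,1]$. Let $\omega_h$ be a Lagrangian representation of the hypograph of $u$ and $\omega_e$ a Lagrangian representation of the epigraph of $u$. Then: (a) for $\omega_h$-a.e. $\gamma\in\Gamma$, for $\mathscr L^1$-a.e. $t\in[0,T]$, the point $(t,\gamma_x(t))$ is a Lebesgue point of $u$ and $\gamma_v(t)<u(t,\gamma_x(t))$; (b) for $\omega_e$-a.e. $\gamma\in\Gamma$, for $\mathscr L^1$-a.e. $t\in[0,T]$, the point $(t,\gamma_x(t))$ is a Lebesgue point of $u$ and $\gamma_v(t)>u(t,\gamma_x(t))$.
   Context: A bounded weak solution with finite entropy production is $u\in C^0([0,T];L^1(\mathbb{R}))\cap L^\infty([0,T]\times\mathbb{R})$ solving $u_t+(u^2/2)_x=0$ in distributions such that $\partial_t\eta(u)+\partial_xq(u)$ is a finite Radon measure for every smooth convex $\eta$ with $q'(v)=\eta'(v)v$. A Lebesgue point of $u$ is a point $z$ for which there is a value $u(z)$ with $\lim_{r\to0}r^{-2}\int_{B_r(z)}|u-u(z)|=0$; at Lebesgue points $u$ denotes this value. For $f:\mathbb{R}\to[0,1]$ set $E_f=\{(x,v)\in\mathbb{R}\times[0,1]:v\le f(x)\}$ and $E_f^c=\{(x,v)\in\mathbb{R}\times[0,1]:v\ge f(x)\}$. Let $\Gamma=\{\gamma=(\gamma_x,\gamma_v)\in BV([0,T];\mathbb{R}\times[0,1]):\gamma_x\text{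 Lipschitz}\}$ and $e_t(\gamma)=\gamma(t)$. A Radon measure $\omega_h$ on $\Gamma$ is a Lagrangian representation of the hypograph of $u$ if (1) $(e_t)_\sharp\omega_h=\mathscr L^2\llcorner E_{u(t)}$ for every $t\in[0,T)$; (2) $\omega_h$ is concentrated on curves with $\dot\gamma_x(t)=\gamma_v(t)$ for a.e. $t$; (3) $\int_\Gamma\mathrm{TotVar}_{[0,T)}\gamma_v\,d\omega_h<\infty$. A Lagrangian representation $\omega_e$ of the epigraph satisfies (2), (3) and $(e_t)_\sharp\omega_e=\mathscr L^2\llcorner E^c_{u(t)}$ for every $t\in[0,T]$. *)

theory Defs
  imports "HOL-Analysis.Analysis"
begin

definition smooth_fun :: "(real \<Rightarrow> real) \<Rightarrow> bool" where
  "smooth_fun f \<longleftrightarrow> (\<forall>n x. ((deriv ^^ n) f) differentiable (at x))"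

text \<open>Partial derivatives of a function of (t,x): True = d/dt, False = d/dx.\<close>
definition pderiv2 :: "bool \<Rightarrow> (real \<times> real \<Rightarrow> real) \<Rightarrow> real \<times> real \<Rightarrow> real" where
  "pderiv2 b f = (\<lambda>p. if b then deriv (\<lambda>s. f (s, snd p)) (fst p)
                           else deriv (\<lambda>y. f (fst p, y)) (snd p))"

definition partial_exists :: "bool \<Rightarrow> (real \<times> real \<Rightarrow> real) \<Rightarrow> real \<times> real \<Rightarrow> bool" where
  "partial_exists b f p \<longleftrightarrow> (if b then (\<lambda>s. f (s, snd p)) differentiable (at (fst p))
                                else (\<lambda>y. f (fst p, y)) differentiable (at (snd p)))"

definition iter_pderiv :: "bool list \<Rightarrow> (real \<times> real \<Rightarrow> real) \<Rightarrow> real \<times> real \<Rightarrow> real" where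
  "iter_pderiv ds f = foldr pderiv2 ds f"

definition smooth2 :: "(real \<times> real \<Rightarrow> real) \<Rightarrow> bool" where
  "smooth2 f \<longleftrightarrow> (\<forall>ds. continuous_on UNIV (iter_pderiv ds f) \<and>
                        (\<forall>b p. partial_exists b (iter_pderiv ds f) p))"

definition tsupport :: "(real \<times> real \<Rightarrow> real) \<Rightarrow> (real \<times> real) set" where
  "tsupport f = closure {p. f p \<noteq> 0}"

text \<open>Test functions in C_c^infinity((0,T) x R); points are (t,x).\<close>
definition test_fun :: "real \<Rightarrow> (real \<times> real \<Rightarrow> real) \<Rightarrow> bool" where
  "test_fun T \<phi> \<longleftrightarrow> smooth2 \<phi> \<and> compact (tsupport \<phi>) \<and> tsupport \<phi> \<subseteq> {0<..<T} \<times> UNIV"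

definition dt :: "(real \<times> real \<Rightarrow> real) \<Rightarrow> real \<times> real \<Rightarrow> real" where
  "dt \<phi> = pderiv2 True \<phi>"

definition dx :: "(real \<times> real \<Rightarrow> real) \<Rightarrow> real \<times> real \<Rightarrow> real" where
  "dx \<phi> = pderiv2 False \<phi>"

text \<open>u t x is the value at time t and position x.
  u in C^0([0,T];L^1(R)) \<inter> L^\<infinity>([0,T] x R).\<close>
definition C0_L1_Linfty :: "real \<Rightarrow> (real \<Rightarrow> real \<Rightarrow> real) \<Rightarrow> bool" where
  "C0_L1_Linfty T u \<longleftrightarrow>
     set_borel_measurable lebesgue ({0..T} \<times> UNIV) (\<lambda>p. u (fst p) (snd p)) \<and>
     (\<exists>M. \<forall>t\<in>{0..T}. \<forall>x. \<bar>u t x\<bar> \<le> M) \<and>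
     (\<forall>t\<in>{0..T}. integrable lebesgue (u t)) \<and>
     (\<forall>t\<in>{0..T}. ((\<lambda>s. LINT x|lebesgue. \<bar>u s x - u t x\<bar>) \<longlongrightarrow> 0) (at t within {0..T}))"

definition weak_solution :: "real \<Rightarrow> (real \<Rightarrow> real \<Rightarrow> real) \<Rightarrow> bool" where
  "weak_solution T u \<longleftrightarrow>
     (\<forall>\<phi>. test_fun T \<phi> \<longrightarrow>
        (LINT p|lebesgue. u (fst p) (snd p) * dt \<phi> p
                         + (u (fst p) (snd p))\<^sup>2 / 2 * dx \<phi> p) = 0)"

text \<open>Finite entropy production: for every smooth convex entropy \<eta> with flux q, q' v = \<eta>' v * v,
  the distribution \<eta>(u)_t + q(u)_x on (0,T) x R is a finite (signed) Radon measure,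
  represented as the difference of two finite Borel measures.\<close>
definition finite_entropy_production :: "real \<Rightarrow> (real \<Rightarrow> real \<Rightarrow> real) \<Rightarrow> bool" where
  "finite_entropy_production T u \<longleftrightarrow>
     (\<forall>\<eta> q. smooth_fun \<eta> \<and> convex_on UNIV \<eta> \<and>
             (\<forall>v. (q has_real_derivative (deriv \<eta> v * v)) (at v)) \<longrightarrow>
        (\<exists>\<mu>1 \<mu>2 :: (real \<times> real) measure.
           finite_measure \<mu>1 \<and> finite_measure \<mu>2 \<and>
           sets \<mu>1 = sets lborel \<and> sets \<mu>2 = sets lborel \<and>
           (\<forall>\<phi>. test_fun T \<phi> \<longrightarrow>
              - (LINT p|lebesgue. \<eta> (u (fst p) (snd p)) * dt \<phi> p
                                 + q (u (fst p) (snd p)) * dx \<phi> p)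
              = (LINT p|\<mu>1. \<phi> p) - (LINT p|\<mu>2. \<phi> p))))"

definition bounded_weak_sol_fep :: "real \<Rightarrow> (real \<Rightarrow> real \<Rightarrow> real) \<Rightarrow> bool" where
  "bounded_weak_sol_fep T u \<longleftrightarrow>
     C0_L1_Linfty T u \<and> weak_solution T u \<and> finite_entropy_production T u"

definition lebesgue_point :: "(real \<Rightarrow> real \<Rightarrow> real) \<Rightarrow> real \<times> real \<Rightarrow> real \<Rightarrow> bool" where
  "lebesgue_point u z c \<longleftrightarrow>
     ((\<lambda>r. (LINT p:ball z r|lebesgue. \<bar>u (fst p) (snd p) - c\<bar>) / r\<^sup>2) \<longlongrightarrow> 0) (at_right 0)"

definition hypo :: "(real \<Rightarrow> real) \<Rightarrow> (real \<times> real) set" where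
  "hypo f = {(x, v). 0 \<le> v \<and> v \<le> 1 \<and> v \<le> f x}"

definition epi :: "(real \<Rightarrow> real) \<Rightarrow> (real \<times> real) set" where
  "epi f = {(x, v). 0 \<le> v \<and> v \<le> 1 \<and> v \<ge> f x}"

definition variation :: "real set \<Rightarrow> (real \<Rightarrow> 'a::real_normed_vector) \<Rightarrow> ennreal" where
  "variation S f = (SUP ts \<in> {ts. sorted ts \<and> set ts \<subseteq> S}.
       \<Sum>i < length ts - 1. ennreal (norm (f (ts ! (i + 1)) - f (ts ! i))))"

definition Curves :: "real \<Rightarrow> (real \<Rightarrow> real \<times> real) set" where
  "Curves T = {\<gamma>. (\<forall>t\<in>{0..T}. snd (\<gamma> t) \<in> {0..1}) \<and>
                  variation {0..T} \<gamma> < \<infinity> \<and>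
                  (\<exists>L. L-lipschitz_on {0..T} (\<lambda>t. fst (\<gamma> t)))}"

definition lagrangian_rep ::
  "real \<Rightarrow> real set \<Rightarrow> (real \<Rightarrow> (real \<times> real) set) \<Rightarrow> (real \<Rightarrow> real \<times> real) measure \<Rightarrow> bool" where
  "lagrangian_rep T I E \<omega> \<longleftrightarrow>
     space \<omega> = Curves T \<and>
     (\<forall>t\<in>I. (\<lambda>\<gamma>. \<gamma> t) \<in> measurable \<omega> lborel \<and>
        (\<forall>A \<in> sets lborel. emeasure (distr \<omega> lborel (\<lambda>\<gamma>. \<gamma> t)) A
                            = emeasure lebesgue (A \<inter> E t))) \<and>
     (AE \<gamma> in \<omega>. AE t in lborel. t \<in> {0..T} \<longrightarrow>
        ((\<lambda>s. fst (\<gamma> s)) has_real_derivative snd (\<gamma> t)) (at t within {0..T})) \<and>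
     (\<integral>\<^sup>+ \<gamma>. variation {0..<T} (\<lambda>s. snd (\<gamma> s)) \<partial>\<omega>) < \<infinity>"

definition lagrangian_rep_hypo :: "real \<Rightarrow> (real \<Rightarrow> real \<Rightarrow> real) \<Rightarrow> (real \<Rightarrow> real \<times> real) measure \<Rightarrow> bool" where
  "lagrangian_rep_hypo T u \<omega> \<longleftrightarrow> lagrangian_rep T {0..<T} (\<lambda>t. hypo (u t)) \<omega>"

definition lagrangian_rep_epi :: "real \<Rightarrow> (real \<Rightarrow> real \<Rightarrow> real) \<Rightarrow> (real \<Rightarrow> real \<times> real) measure \<Rightarrow> bool" where
  "lagrangian_rep_epi T u \<omega> \<longleftrightarrow> lagrangian_rep T {0..T} (\<lambda>t. epi (u t)) \<omega>"

end

theory Submission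
  imports Defs
begin

text \<open>
  At every fixed time t the hypograph representation distributes \<open>\<gamma> t\<close> like Lebesgue measure
  on the hypograph of \<open>u t\<close>. Consider the set B of points (t, x, v) such that (t, x) is not a
  Lebesgue point of u or \<open>v \<ge> u t x\<close>. Inside the hypograph, each time slice of B lies in the graph
  of \<open>u t\<close> up to a null set, so it is null, and by Fubini almost every curve avoids B at almost
  every time. The epigraph is symmetric.

  Fubini needs \<open>(\<gamma>, t) \<mapsto> \<gamma> t\<close> to be jointly measurable, which the definition does not provide.
  We replace \<open>\<gamma> t\<close> by the limit of \<gamma> along dyadic times from the right. This limit is jointly
  measurable, and it agrees with \<open>\<gamma> t\<close> except at the countably many jumps of the BV curve \<gamma>.
  By Fatou's lemma and the \<open>L\<^sup>1\<close>-continuity of \<open>t \<mapsto> u t\<close>, its law is still dominated by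
  Lebesgue measure on the hypograph.
\<close>

section \<open>Lebesgue points\<close>

lemma emeasure_disjoint_balls_le:
  fixes E U :: "'a::euclidean_space set" and c :: "'i \<Rightarrow> 'a"
  assumes E: "E \<in> sets lebesgue" and U: "U \<in> sets lebesgue" and C: "countable C" and e: "e \<ge> 0"
    and disj: "disjoint_family_on (\<lambda>i. ball (c i) (r i)) C"
    and balls: "\<And>i. i \<in> C \<Longrightarrow> ball (c i) (r i) \<subseteq> U"
      "\<And>i. i \<in> C \<Longrightarrow> e * measure lebesgue (ball (c i) (r i)) \<le> measure lebesgue (ball (c i) (r i) - E)"
  shows "ennreal e * emeasure lebesgue (\<Union>i\<in>C. ball (c i) (r i)) \<le> emeasure lebesgue (U - E)"
proof -
  have "ennreal e * emeasure lebesgue (\<Union>i\<in>C. ball (c i) (r i))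
      = (\<integral>\<^sup>+i. ennreal e * emeasure lebesgue (ball (c i) (r i)) \<partial>count_space C)"
    using C disj by (simp add: emeasure_UN_countable nn_integral_cmult)
  also have "\<dots> \<le> (\<integral>\<^sup>+i. emeasure lebesgue (ball (c i) (r i) - E) \<partial>count_space C)"
    using balls(2) E e
    by (intro nn_integral_mono) (auto simp: emeasure_eq_measure2 fmeasurable_Diff
        simp flip: ennreal_mult intro!: ennreal_leI)
  also have "\<dots> = emeasure lebesgue (\<Union>i\<in>C. ball (c i) (r i) - E)"
  proof (subst emeasure_UN_countable)
    show "disjoint_family_on (\<lambda>i. ball (c i) (r i) - E) C"
      using disj unfolding disjoint_family_on_def by blast
  qed (use C E in auto)
  also have "\<dots> \<le> emeasure lebesgue (U - E)"
    using balls(1) E U by (intro emeasure_mono) auto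
  finally show ?thesis .
qed

lemma obtain_vitali_density_balls:
  fixes E U S :: "'a::euclidean_space set"
  assumes U: "open U" and SU: "S \<subseteq> U"
    and dense: "\<And>z. z \<in> S \<Longrightarrow>
      \<exists>\<^sub>F r in at_right 0. e * measure lebesgue (ball z r) < measure lebesgue (ball z r - E)"
  obtains C where "countable C" "disjoint_family_on (\<lambda>i. ball (fst i) (snd i)) C"
    "negligible (S - (\<Union>i\<in>C. ball (fst i) (snd i)))"
    "\<And>i. i \<in> C \<Longrightarrow> ball (fst i) (snd i) \<subseteq> U"
    "\<And>i. i \<in> C \<Longrightarrow> e * measure lebesgue (ball (fst i) (snd i)) \<le> measure lebesgue (ball (fst i) (snd i) - E)"
proof -
  define K where "K = {(z, r). ball z r \<subseteq> U \<and>
      e * measure lebesgue (ball z r) < measure lebesgue (ball z r - E)}"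
  obtain C where C: "countable C" "C \<subseteq> K"
    and disj: "pairwise (\<lambda>i j. disjnt (ball (fst i) (snd i)) (ball (fst j) (snd j))) C"
    and neg: "negligible (S - (\<Union>i\<in>C. ball (fst i) (snd i)))"
  proof (rule Vitali_covering_theorem_balls[of S K fst snd])
    fix z and d :: real assume z: "z \<in> S" and d: "0 < d"
    obtain k where k: "k > 0" "ball z k \<subseteq> U" using U SU z openE by blast
    have "\<forall>\<^sub>F r in at_right 0. 0 < r \<and> r < min d k"
      using d k(1) by (auto simp: eventually_at_right_field intro: exI[of _ "min d k"])
    then obtain r where r: "0 < r" "r < min d k"
      "e * measure lebesgue (ball z r) < measure lebesgue (ball z r - E)"
      using frequently_eventually_frequently[OF dense[OF z]] frequently_ex by blast
    then have "(z, r) \<in> K" using k by (auto simp: K_def intro: order_trans[OF subset_ball])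
    with r show "\<exists>i. i \<in> K \<and> z \<in> ball (fst i) (snd i) \<and> snd i < d" by force
  qed
  show ?thesis
  proof (rule that[OF C(1) _ neg])
    show "disjoint_family_on (\<lambda>i. ball (fst i) (snd i)) C"
      using disj by (auto simp: disjoint_family_on_def pairwise_def disjnt_def)
    fix i assume "i \<in> C"
    with C(2) have "i \<in> K" by blast
    then show "ball (fst i) (snd i) \<subseteq> U"
      "e * measure lebesgue (ball (fst i) (snd i)) \<le> measure lebesgue (ball (fst i) (snd i) - E)"
      by (auto simp: K_def)
  qed
qed

lemma vitali_density_bound:
  fixes E U S :: "'a::euclidean_space set"
  assumes E: "E \<in> sets lebesgue" and e: "e > 0" and U: "open U" "bounded U" and SU: "S \<subseteq> U"
    and dense: "\<And>z. z \<in> S \<Longrightarrow>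
      \<exists>\<^sub>F r in at_right 0. e * measure lebesgue (ball z r) < measure lebesgue (ball z r - E)"
  obtains V where "S \<subseteq> V" "V \<in> lmeasurable" "e * measure lebesgue V \<le> measure lebesgue (U - E)"
proof -
  obtain C where C: "countable C" "disjoint_family_on (\<lambda>i. ball (fst i) (snd i)) C"
    and neg: "negligible (S - (\<Union>i\<in>C. ball (fst i) (snd i)))"
    and balls: "\<And>i. i \<in> C \<Longrightarrow> ball (fst i) (snd i) \<subseteq> U"
      "\<And>i. i \<in> C \<Longrightarrow> e * measure lebesgue (ball (fst i) (snd i)) \<le> measure lebesgue (ball (fst i) (snd i) - E)"
    using obtain_vitali_density_balls[OF U(1) SU dense] by blast
  let ?B = "\<Union>i\<in>C. ball (fst i) (snd i)"
  have "?B \<subseteq> U" using balls(1) by blast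
  then have B: "?B \<in> lmeasurable"
    using U by (intro lmeasurable_open) (auto intro: bounded_subset)
  have "ennreal e * emeasure lebesgue ?B \<le> emeasure lebesgue (U - E)"
    using E U C e balls by (intro emeasure_disjoint_balls_le) auto
  moreover have "U - E \<in> lmeasurable"
    using E U by (intro fmeasurable_Diff lmeasurable_open) auto
  ultimately have le: "e * measure lebesgue ?B \<le> measure lebesgue (U - E)"
    using B e by (simp add: emeasure_eq_measure2 flip: ennreal_mult)
  have N: "negligible (?B - (S \<union> ?B) \<union> (S \<union> ?B - ?B))"
    by (rule negligible_subset[OF neg]) auto
  show ?thesis
  proof
    show "S \<subseteq> S \<union> ?B" by blast
    show "S \<union> ?B \<in> lmeasurable" using B N by (rule lmeasurable_negligible_symdiff)
    show "e * measure lebesgue (S \<union> ?B) \<le> measure lebesgue (U - E)"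
      using le measure_negligible_symdiff[OF B N] by simp
  qed
qed

theorem lebesgue_density_theorem:
  fixes E :: "'a::euclidean_space set"
  assumes E: "E \<in> sets lebesgue" and e: "e > 0"
  shows "negligible {z \<in> E. \<exists>\<^sub>F r in at_right 0.
           e * measure lebesgue (ball z r) < measure lebesgue (ball z r - E)}"
    (is "negligible ?S")
proof -
  have "negligible (?S \<inter> ball 0 n)" for n :: real
    unfolding negligible_outer_le
  proof (intro allI impI)
    fix \<epsilon> :: real assume "\<epsilon> > 0"
    have "E \<inter> ball 0 n \<in> sets lebesgue" using E by (intro sets.Int) auto
    then obtain U0 where U0: "open U0" "E \<inter> ball 0 n \<subseteq> U0" "U0 - E \<inter> ball 0 n \<in> lmeasurable"
        "emeasure lebesgue (U0 - E \<inter> ball 0 n) < ennreal (e * \<epsilon>)"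
      using sets_lebesgue_outer_open[of _ "e * \<epsilon>"] e \<open>\<epsilon> > 0\<close> by (metis mult_pos_pos)
    obtain V where V: "?S \<inter> ball 0 n \<subseteq> V" "V \<in> lmeasurable"
        "e * measure lebesgue V \<le> measure lebesgue (U0 \<inter> ball 0 n - E)"
    proof (rule vitali_density_bound[OF E e])
      show "open (U0 \<inter> ball 0 n)" "bounded (U0 \<inter> ball 0 n)" using U0 by auto
      show "?S \<inter> ball 0 n \<subseteq> U0 \<inter> ball 0 n" using U0(2) by blast
    qed auto
    have "measure lebesgue (U0 \<inter> ball 0 n - E) \<le> measure lebesgue (U0 - E \<inter> ball 0 n)"
      using U0 E by (intro measure_mono_fmeasurable) auto
    also have "\<dots> < e * \<epsilon>"
      using U0(3,4) e \<open>\<epsilon> > 0\<close> by (simp add: emeasure_eq_measure2 ennreal_less_iff)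
    finally have "e * measure lebesgue V < e * \<epsilon>" using V(3) by linarith
    then have "measure lebesgue V \<le> \<epsilon>" using e by simp
    with V show "\<exists>T. ?S \<inter> ball 0 n \<subseteq> T \<and> T \<in> lmeasurable \<and> measure lebesgue T \<le> \<epsilon>"
      by blast
  qed
  then have "negligible (\<Union>n. ?S \<inter> ball 0 (real n))"
    by (intro negligible_countable_Union) auto
  moreover have "?S = (\<Union>n. ?S \<inter> ball 0 (real n))"
    by (auto simp: dist_norm intro: reals_Archimedean2)
  ultimately show ?thesis by simp
qed

definition is_lebesgue_point :: "('a::euclidean_space \<Rightarrow> real) \<Rightarrow> 'a \<Rightarrow> bool" where
  "is_lebesgue_point f z \<longleftrightarrow> (\<forall>\<delta>>0. \<forall>\<^sub>F r in at_right 0.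
     (LINT p:ball z r|lebesgue. \<bar>f p - f z\<bar>) \<le> \<delta> * measure lebesgue (ball z r))"

lemma set_integral_ball_abs_diff_le:
  fixes f :: "'a::euclidean_space \<Rightarrow> real"
  assumes f: "f \<in> borel_measurable lebesgue" and bound: "\<And>p. \<bar>f p - a\<bar> \<le> 1"
    and L: "L \<in> sets lebesgue" and c: "c \<ge> 0" and close: "\<And>p. p \<in> L \<Longrightarrow> \<bar>f p - a\<bar> \<le> c"
  shows "(LINT p:ball z r|lebesgue. \<bar>f p - a\<bar>)
           \<le> c * measure lebesgue (ball z r) + measure lebesgue (ball z r - L)"
proof -
  have B: "ball z r \<in> lmeasurable" and BL: "ball z r - L \<in> lmeasurable"
    using L by (auto intro: fmeasurable_Diff)
  have int: "integrable lebesgue (\<lambda>p. indicator (ball z r) p *\<^sub>R \<bar>f p - a\<bar>)"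
    using B f bound
    by (intro integrableI_bounded_set_indicator[where B=1]) (auto simp: fmeasurable_def)
  have ind: "integrable lebesgue (indicator (ball z r) :: 'a \<Rightarrow> real)"
    "integrable lebesgue (indicator (ball z r - L) :: 'a \<Rightarrow> real)"
    using B BL by (auto simp: integrable_indicator_iff fmeasurable_def)
  have "(LINT p:ball z r|lebesgue. \<bar>f p - a\<bar>) = (\<integral>p. indicator (ball z r) p *\<^sub>R \<bar>f p - a\<bar> \<partial>lebesgue)"
    by (simp add: set_lebesgue_integral_def)
  also have "\<dots> \<le> (\<integral>p. c * indicator (ball z r) p + indicator (ball z r - L) p \<partial>lebesgue)"
  proof (rule integral_mono[OF int])
    show "integrable lebesgue (\<lambda>p. c * indicator (ball z r) p + indicator (ball z r - L) p :: real)"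
      using ind by simp
    show "indicator (ball z r) p *\<^sub>R \<bar>f p - a\<bar> \<le> c * indicator (ball z r) p + indicator (ball z r - L) p"
      for p
      using close[of p] bound[of p] c by (auto simp: indicator_def)
  qed
  also have "\<dots> = c * measure lebesgue (ball z r) + measure lebesgue (ball z r - L)"
    using ind by simp
  finally show ?thesis .
qed

lemma is_lebesgue_pointI:
  fixes f :: "'a::euclidean_space \<Rightarrow> real"
  assumes f: "f \<in> borel_measurable lebesgue" and bound: "\<And>p. \<bar>f p - f z\<bar> \<le> 1"
    and level_sets: "\<And>\<delta>. \<delta> > 0 \<Longrightarrow> \<exists>L \<in> sets lebesgue. (\<forall>p\<in>L. \<bar>f p - f z\<bar> \<le> \<delta>) \<and>
        (\<forall>\<^sub>F r in at_right 0. measure lebesgue (ball z r - L) \<le> \<delta> * measure lebesgue (ball z r))"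
  shows "is_lebesgue_point f z"
  unfolding is_lebesgue_point_def
proof (intro allI impI)
  fix \<delta> :: real assume "\<delta> > 0"
  then obtain L where L: "L \<in> sets lebesgue" "\<And>p. p \<in> L \<Longrightarrow> \<bar>f p - f z\<bar> \<le> \<delta> / 2"
    and small: "\<forall>\<^sub>F r in at_right 0. measure lebesgue (ball z r - L) \<le> \<delta> / 2 * measure lebesgue (ball z r)"
    using level_sets[of "\<delta> / 2"] by auto
  from small show "\<forall>\<^sub>F r in at_right 0.
      (LINT p:ball z r|lebesgue. \<bar>f p - f z\<bar>) \<le> \<delta> * measure lebesgue (ball z r)"
  proof eventually_elim
    case (elim r)
    have "(LINT p:ball z r|lebesgue. \<bar>f p - f z\<bar>)
        \<le> \<delta> / 2 * measure lebesgue (ball z r) + measure lebesgue (ball z r - L)"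
      using \<open>\<delta> > 0\<close> by (intro set_integral_ball_abs_diff_le[OF f bound L(1)] L(2)) auto
    with elim show ?case by simp
  qed
qed

theorem negligible_not_is_lebesgue_point:
  fixes f :: "'a::euclidean_space \<Rightarrow> real"
  assumes f: "f \<in> borel_measurable lebesgue" and f01: "\<And>z. f z \<in> {0..1}"
  shows "negligible {z. \<not> is_lebesgue_point f z}"
proof -
  \<comment> \<open>Cut the range into intervals of length \<open>1 / Suc m\<close>. By the density theorem, almost every
    point has density one in the preimage of its own interval.\<close>
  define L where "L m k = f -` {real k / real (Suc m) ..< (real k + 1) / real (Suc m)}" for m k :: nat
  have L: "L m k \<in> sets lebesgue" for m k
    using measurable_sets[OF f, of "{real k / real (Suc m) ..< (real k + 1) / real (Suc m)}"]
    by (simp add: L_def)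
  define D where "D m k = {z \<in> L m k. \<exists>\<^sub>F r in at_right 0.
      1 / real (Suc m) * measure lebesgue (ball z r) < measure lebesgue (ball z r - L m k)}" for m k
  have "negligible (D m k)" for m k
    unfolding D_def by (rule lebesgue_density_theorem[OF L]) simp
  then have "negligible (\<Union>m. \<Union>k. D m k)"
    by (intro negligible_countable_Union) auto
  moreover have "is_lebesgue_point f z" if z: "z \<notin> (\<Union>m. \<Union>k. D m k)" for z
  proof (rule is_lebesgue_pointI[OF f])
    show "\<bar>f p - f z\<bar> \<le> 1" for p using f01[of p] f01[of z] by auto
    fix \<delta> :: real assume "\<delta> > 0"
    then obtain m :: nat where m: "1 / real (Suc m) < \<delta>" by (metis nat_approx_posE)
    define k where "k = nat \<lfloor>f z * real (Suc m)\<rfloor>"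
    have "real k \<le> f z * real (Suc m)" "f z * real (Suc m) < real k + 1"
      using f01[of z] by (auto simp: k_def)
    then have zL: "z \<in> L m k" by (simp add: L_def field_simps)
    then have "\<forall>\<^sub>F r in at_right 0.
        measure lebesgue (ball z r - L m k) \<le> 1 / real (Suc m) * measure lebesgue (ball z r)"
      using z by (auto simp: D_def not_frequently not_less)
    then have "\<forall>\<^sub>F r in at_right 0. measure lebesgue (ball z r - L m k) \<le> \<delta> * measure lebesgue (ball z r)"
    proof eventually_elim
      case (elim r)
      have "1 / real (Suc m) * measure lebesgue (ball z r) \<le> \<delta> * measure lebesgue (ball z r)"
        using m by (intro mult_right_mono) auto
      with elim show ?case by linarith
    qed
    moreover have "\<forall>p \<in> L m k. \<bar>f p - f z\<bar> \<le> \<delta>"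
      using zL m by (auto simp: L_def abs_le_iff add_divide_distrib)
    ultimately show "\<exists>L \<in> sets lebesgue. (\<forall>p\<in>L. \<bar>f p - f z\<bar> \<le> \<delta>) \<and>
        (\<forall>\<^sub>F r in at_right 0. measure lebesgue (ball z r - L) \<le> \<delta> * measure lebesgue (ball z r))"
      using L by blast
  qed
  ultimately show ?thesis by (metis (mono_tags) mem_Collect_eq negligible_subset subsetI)
qed

lemma lebesgue_point_if_is_lebesgue_point:
  fixes u :: "real \<Rightarrow> real \<Rightarrow> real" and f :: "real \<times> real \<Rightarrow> real"
  assumes S: "open S" "z \<in> S" and f: "\<And>p. p \<in> S \<Longrightarrow> f p = u (fst p) (snd p)"
    and z: "is_lebesgue_point f z"
  shows "lebesgue_point u z (f z)"
  unfolding lebesgue_point_def tendsto_iff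
proof (intro allI impI)
  fix e :: real assume "e > 0"
  define C where "C = measure lebesgue (ball (0::real \<times> real) 1)"
  have "C > 0" using content_ball_pos[of 1 "0::real \<times> real"] by (simp add: C_def)
  have ball: "measure lebesgue (ball z r) = C * r\<^sup>2" if "r \<ge> 0" for r
    using content_ball_conv_unit_ball[OF that, of z] by (simp add: C_def power2_eq_square)
  obtain d where "d > 0" "ball z d \<subseteq> S" using S openE by blast
  then have "\<forall>\<^sub>F r in at_right 0. ball z r \<subseteq> S \<and> 0 < r"
    by (auto simp: eventually_at_right_field intro!: exI[of _ d] dest: subset_ball)
  moreover have "e / (2 * C) > 0" using \<open>e > 0\<close> \<open>C > 0\<close> by simp
  then have "\<forall>\<^sub>F r in at_right 0.
      (LINT p:ball z r|lebesgue. \<bar>f p - f z\<bar>) \<le> e / (2 * C) * measure lebesgue (ball z r)"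
    using z unfolding is_lebesgue_point_def by blast
  ultimately show "\<forall>\<^sub>F r in at_right 0.
      dist ((LINT p:ball z r|lebesgue. \<bar>u (fst p) (snd p) - f z\<bar>) / r\<^sup>2) 0 < e"
  proof eventually_elim
    case (elim r)
    have "(LINT p:ball z r|lebesgue. \<bar>u (fst p) (snd p) - f z\<bar>)
        = (LINT p:ball z r|lebesgue. \<bar>f p - f z\<bar>)"
      using elim f by (intro set_lebesgue_integral_cong) auto
    moreover have "0 \<le> (LINT p:ball z r|lebesgue. \<bar>f p - f z\<bar>)"
      unfolding set_lebesgue_integral_def by (intro integral_nonneg_AE) auto
    moreover have "e / (2 * C) * measure lebesgue (ball z r) < e * r\<^sup>2"
      using elim ball[of r] \<open>e > 0\<close> \<open>C > 0\<close> by (simp add: field_simps)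
    ultimately have "\<bar>LINT p:ball z r|lebesgue. \<bar>u (fst p) (snd p) - f z\<bar>\<bar> < e * r\<^sup>2"
      using elim by linarith
    then show ?case
      using elim by (simp add: dist_real_def divide_less_eq)
  qed
qed

lemma obtain_borel_lebesgue_points:
  fixes u :: "real \<Rightarrow> real \<Rightarrow> real"
  assumes meas: "set_borel_measurable lebesgue ({0..T} \<times> UNIV) (\<lambda>p. u (fst p) (snd p))"
    and u01: "\<forall>t\<in>{0..T}. \<forall>x. 0 \<le> u t x \<and> u t x \<le> 1"
  obtains N ut where "N \<in> null_sets lborel" "ut \<in> borel_measurable borel"
    "\<And>t x. t \<in> {0<..<T} \<Longrightarrow> (t, x) \<notin> N \<Longrightarrow> lebesgue_point u (t, x) (u t x) \<and> ut (t, x) = u t x"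
proof -
  define f where "f p = indicator ({0..T} \<times> UNIV) p *\<^sub>R u (fst p) (snd p)" for p :: "real \<times> real"
  have f: "f \<in> borel_measurable lebesgue"
    using meas unfolding set_borel_measurable_def f_def by simp
  have "f p \<in> {0..1}" for p
    using u01 by (cases p) (auto simp: f_def indicator_def)
  then have "negligible {z. \<not> is_lebesgue_point f z}"
    by (rule negligible_not_is_lebesgue_point[OF f])
  then obtain N1 where N1: "N1 \<in> null_sets lborel" "{z. \<not> is_lebesgue_point f z} \<subseteq> N1"
    by (auto simp: negligible_iff_null_sets null_sets_completion_iff2)
  obtain ut where ut: "ut \<in> borel_measurable lborel" "AE z in lborel. f z = ut z"
    using completion_ex_borel_measurable_real[OF f] by blast
  from ut(2) obtain N2 where N2: "{z \<in> space lborel. f z \<noteq> ut z} \<subseteq> N2" "N2 \<in> null_sets lborel"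
    by (rule AE_E) (simp add: null_sets_def)
  show ?thesis
  proof (rule that[of "N1 \<union> N2" ut])
    show "N1 \<union> N2 \<in> null_sets lborel" using N1 N2 by auto
    show "ut \<in> borel_measurable borel" using ut by simp
    fix t x assume t: "t \<in> {0<..<T}" and tx: "(t, x) \<notin> N1 \<union> N2"
    have "lebesgue_point u (t, x) (f (t, x))"
    proof (rule lebesgue_point_if_is_lebesgue_point)
      show "open ({0<..<T} \<times> (UNIV :: real set))" by (intro open_Times) auto
      show "f p = u (fst p) (snd p)" if "p \<in> {0<..<T} \<times> UNIV" for p
        using that by (auto simp: f_def)
      show "is_lebesgue_point f (t, x)" using N1 tx by auto
    qed (use t in auto)
    moreover have "f (t, x) = ut (t, x)" using N2 tx by auto
    moreover have "f (t, x) = u t x" using t by (simp add: f_def)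
    ultimately show "lebesgue_point u (t, x) (u t x) \<and> ut (t, x) = u t x" by simp
  qed
qed

section \<open>Curves of bounded variation\<close>

fun variation_sum :: "(real \<Rightarrow> 'a::real_normed_vector) \<Rightarrow> real list \<Rightarrow> real" where
  "variation_sum f (x # y # zs) = norm (f y - f x) + variation_sum f (y # zs)"
| "variation_sum f _ = 0"

lemma variation_sum_nonneg: "variation_sum f ts \<ge> 0"
  by (induction f ts rule: variation_sum.induct) auto

lemma variation_sum_eq_sum:
  "variation_sum f ts = (\<Sum>i < length ts - 1. norm (f (ts ! (i + 1)) - f (ts ! i)))"
proof (induction f ts rule: variation_sum.induct)
  case (1 f x y zs)
  have "length (x # y # zs) - 1 = Suc (length (y # zs) - 1)" by simp
  then show ?case using 1 by (simp only: sum.lessThan_Suc_shift) simp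
qed auto

lemma variation_sum_le_variation:
  assumes "sorted ts" "set ts \<subseteq> S"
  shows "ennreal (variation_sum f ts) \<le> variation S f"
  unfolding variation_def variation_sum_eq_sum using assms
  by (subst sum_ennreal[symmetric]) (auto intro: SUP_upper)

lemma variation_sum_append_pair:
  "variation_sum f xs + norm (f b - f a) \<le> variation_sum f (xs @ [a, b])"
  by (induction xs rule: induct_list012) (auto simp: variation_sum_nonneg)

lemma variation_sum_bound:
  assumes "variation S f < \<infinity>" and "\<epsilon> > 0"
  obtains k :: nat where "\<And>ts. sorted ts \<Longrightarrow> set ts \<subseteq> S \<Longrightarrow> variation_sum f ts < real k * \<epsilon>"
proof -
  obtain k :: nat where k: "enn2real (variation S f) / \<epsilon> < real k"
    using reals_Archimedean2 by blast
  show ?thesis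
  proof (rule that[of k])
    fix ts assume "sorted ts" "set ts \<subseteq> S"
    then have "enn2real (ennreal (variation_sum f ts)) \<le> enn2real (variation S f)"
      using assms(1) by (intro enn2real_mono variation_sum_le_variation) auto
    then show "variation_sum f ts < real k * \<epsilon>"
      using k assms(2) by (simp add: variation_sum_nonneg field_simps)
  qed
qed

lemma Cauchy_from_right_if_variation_finite:
  fixes \<gamma> :: "real \<Rightarrow> 'a::real_normed_vector"
  assumes V: "variation S \<gamma> < \<infinity>"
    and s: "\<And>n. s n \<in> S" "s \<longlonglongrightarrow> t" "\<forall>\<^sub>F n in sequentially. t < s n"
  shows "Cauchy (\<lambda>n. \<gamma> (s n))"
proof (rule ccontr)
  assume "\<not> Cauchy (\<lambda>n. \<gamma> (s n))"
  then obtain \<epsilon> where \<epsilon>: "\<epsilon> > 0" and far: "\<And>M. \<exists>m\<ge>M. \<exists>n\<ge>M. \<epsilon> \<le> dist (\<gamma> (s m)) (\<gamma> (s n))"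
    unfolding Cauchy_def by (meson not_less)
  have "\<forall>c>t. \<exists>ts. sorted ts \<and> set ts \<subseteq> S \<inter> {t<..<c} \<and> real k * \<epsilon> \<le> variation_sum \<gamma> ts"
    for k :: nat
  proof (induction k)
    case 0
    show ?case by (auto intro: exI[of _ "[]"])
  next
    case (Suc k)
    show ?case
    proof (intro allI impI)
      fix c assume "c > t"
      then have "\<forall>\<^sub>F n in sequentially. t < s n \<and> s n < c"
        using s(2,3) by (auto intro: eventually_conj order_tendstoD(2))
      then obtain M where M: "\<And>n. n \<ge> M \<Longrightarrow> t < s n \<and> s n < c"
        by (auto simp: eventually_sequentially)
      obtain m n where mn: "m \<ge> M" "n \<ge> M" "\<epsilon> \<le> dist (\<gamma> (s m)) (\<gamma> (s n))"
        using far by blast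
      define lo where "lo = min (s m) (s n)"
      define hi where "hi = max (s m) (s n)"
      have "t < lo" "lo \<le> hi" "hi < c" "lo \<in> S" "hi \<in> S"
        using M[OF mn(1)] M[OF mn(2)] s(1) by (auto simp: lo_def hi_def min_def max_def)
      moreover have "\<epsilon> \<le> norm (\<gamma> hi - \<gamma> lo)"
        using mn(3) by (auto simp: lo_def hi_def dist_norm min_def max_def norm_minus_commute)
      moreover obtain ts where "sorted ts" "set ts \<subseteq> S \<inter> {t<..<lo}" "real k * \<epsilon> \<le> variation_sum \<gamma> ts"
        using Suc \<open>t < lo\<close> by blast
      ultimately show "\<exists>ts. sorted ts \<and> set ts \<subseteq> S \<inter> {t<..<c} \<and> real (Suc k) * \<epsilon> \<le> variation_sum \<gamma> ts"
        using variation_sum_append_pair[where f=\<gamma> and xs=ts and a=lo and b=hi]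
        by (intro exI[of _ "ts @ [lo, hi]"]) (auto simp: sorted_append distrib_right)
    qed
  qed
  moreover obtain k where "\<And>ts. sorted ts \<Longrightarrow> set ts \<subseteq> S \<Longrightarrow> variation_sum \<gamma> ts < real k * \<epsilon>"
    using variation_sum_bound[OF V \<epsilon>] by blast
  ultimately show False
    by (meson inf.boundedE less_add_one not_less)
qed

lemma variation_sum_ge_card_right_jumps:
  fixes \<gamma> :: "real \<Rightarrow> 'a::real_normed_vector"
  assumes "finite F" "F \<subseteq> {a..<b}" "\<forall>x\<in>F. x < c"
    and "\<forall>x\<in>F. (\<lambda>n. s n x) \<longlonglongrightarrow> x \<and> (\<forall>\<^sub>F n in sequentially. x < s n x) \<and>
                   (\<exists>\<^sub>F n in sequentially. \<epsilon> \<le> norm (\<gamma> (s n x) - \<gamma> x))"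
  shows "\<exists>ts. sorted ts \<and> set ts \<subseteq> {a..<c} \<and> real (card F) * \<epsilon> \<le> variation_sum \<gamma> ts"
  using assms
proof (induction F arbitrary: c rule: finite_linorder_max_induct)
  case empty
  show ?case by (auto intro: exI[of _ "[]"])
next
  case (insert x F)
  then have x: "x \<in> {a..<b}" "x < c" "(\<lambda>n. s n x) \<longlonglongrightarrow> x" "\<forall>\<^sub>F n in sequentially. x < s n x"
      "\<exists>\<^sub>F n in sequentially. \<epsilon> \<le> norm (\<gamma> (s n x) - \<gamma> x)"
    by auto
  then have "\<forall>\<^sub>F n in sequentially. x < s n x \<and> s n x < c"
    by (auto intro: eventually_conj order_tendstoD(2))
  then obtain n where n: "\<epsilon> \<le> norm (\<gamma> (s n x) - \<gamma> x)" "x < s n x" "s n x < c"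
    using frequently_eventually_frequently[OF x(5)] frequently_ex by blast
  have "\<exists>ts. sorted ts \<and> set ts \<subseteq> {a..<x} \<and> real (card F) * \<epsilon> \<le> variation_sum \<gamma> ts"
    using insert.prems insert.hyps by (intro insert.IH) auto
  then obtain ts where ts: "sorted ts" "set ts \<subseteq> {a..<x}" "real (card F) * \<epsilon> \<le> variation_sum \<gamma> ts"
    by blast
  have "card (insert x F) = Suc (card F)" using insert by auto
  then show ?case
    using ts n x(1,2) variation_sum_append_pair[where f=\<gamma> and xs=ts and a=x and b="s n x"]
    by (intro exI[of _ "ts @ [x, s n x]"]) (auto simp: sorted_append distrib_right)
qed

theorem countable_right_discontinuities_if_variation_finite:
  fixes \<gamma> :: "real \<Rightarrow> 'a::real_normed_vector"
  assumes V: "variation {a..b} \<gamma> < \<infinity>"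
    and s: "\<And>x. x \<in> {a..<b} \<Longrightarrow> (\<lambda>n. s n x) \<longlonglongrightarrow> x \<and> (\<forall>\<^sub>F n in sequentially. x < s n x)"
  shows "countable {x \<in> {a..<b}. \<not> (\<lambda>n. \<gamma> (s n x)) \<longlonglongrightarrow> \<gamma> x}"
proof -
  define J where "J j = {x \<in> {a..<b}.
      \<exists>\<^sub>F n in sequentially. 1 / real (Suc j) \<le> norm (\<gamma> (s n x) - \<gamma> x)}" for j :: nat
  have finite: "finite (J j)" for j
  proof (rule ccontr)
    assume "infinite (J j)"
    obtain k where k: "\<And>ts. sorted ts \<Longrightarrow> set ts \<subseteq> {a..b} \<Longrightarrow>
        variation_sum \<gamma> ts < real k * (1 / real (Suc j))"
      using variation_sum_bound[OF V, of "1 / real (Suc j)"] by auto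
    obtain F where F: "finite F" "card F = k" "F \<subseteq> J j"
      using infinite_arbitrarily_large[OF \<open>infinite (J j)\<close>] by blast
    then obtain ts where "sorted ts" "set ts \<subseteq> {a..<b}"
        "real k * (1 / real (Suc j)) \<le> variation_sum \<gamma> ts"
      using variation_sum_ge_card_right_jumps[of F a b b s "1 / real (Suc j)" \<gamma>] s
      by (auto simp: J_def subset_iff)
    with k show False by fastforce
  qed
  have "{x \<in> {a..<b}. \<not> (\<lambda>n. \<gamma> (s n x)) \<longlonglongrightarrow> \<gamma> x} \<subseteq> (\<Union>j. J j)"
  proof
    fix x assume x: "x \<in> {x \<in> {a..<b}. \<not> (\<lambda>n. \<gamma> (s n x)) \<longlonglongrightarrow> \<gamma> x}"
    then obtain e where "e > 0" and e: "\<exists>\<^sub>F n in sequentially. e \<le> dist (\<gamma> (s n x)) (\<gamma> x)"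
      by (auto simp: tendsto_iff not_eventually not_less)
    then obtain j where "1 / real (Suc j) < e" by (metis nat_approx_posE)
    with e have "\<exists>\<^sub>F n in sequentially. 1 / real (Suc j) \<le> norm (\<gamma> (s n x) - \<gamma> x)"
      by (elim frequently_elim1) (simp add: dist_norm)
    then show "x \<in> (\<Union>j. J j)" using x by (auto simp: J_def)
  qed
  moreover have "countable (\<Union>j. J j)"
    using finite by (intro countable_UN) (auto intro: countable_finite)
  ultimately show ?thesis by (rule countable_subset)
qed

section \<open>Right limits along dyadic times\<close>

definition dyadic_above :: "nat \<Rightarrow> real \<Rightarrow> real" where
  "dyadic_above n t = (of_int \<lfloor>2 ^ n * t\<rfloor> + 1) / 2 ^ n"

text \<open>The fallback value 0 keeps all values in \<open>{0..<T}\<close>, where evaluation of curves is measurable.\<close>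

definition dyadic_approx :: "real \<Rightarrow> nat \<Rightarrow> real \<Rightarrow> real" where
  "dyadic_approx T n t = (if dyadic_above n t \<in> {0..<T} then dyadic_above n t else 0)"

lemma dyadic_above_bounds: "t < dyadic_above n t" "dyadic_above n t \<le> t + 1 / 2 ^ n"
  unfolding dyadic_above_def by (simp_all add: field_simps) linarith+

lemma tendsto_dyadic_above: "(\<lambda>n. dyadic_above n t) \<longlonglongrightarrow> t"
proof (rule tendsto_sandwich[of "\<lambda>n. t" _ _ "\<lambda>n. t + 1 / 2 ^ n"])
  have "(\<lambda>n. t + 1 / 2 ^ n) \<longlonglongrightarrow> t + 0"
    by (intro tendsto_add tendsto_const LIMSEQ_divide_realpow_zero) simp
  then show "(\<lambda>n. t + 1 / 2 ^ n) \<longlonglongrightarrow> t" by simp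
qed (auto simp: dyadic_above_bounds less_imp_le)

lemma dyadic_approx_in: "T > 0 \<Longrightarrow> dyadic_approx T n t \<in> {0..<T}"
  by (simp add: dyadic_approx_def)

lemma eventually_dyadic_approx_eq:
  assumes "t \<in> {0..<T}"
  shows "\<forall>\<^sub>F n in sequentially. dyadic_approx T n t = dyadic_above n t"
proof -
  have "\<forall>\<^sub>F n in sequentially. dyadic_above n t < T"
    using assms by (intro order_tendstoD(2)[OF tendsto_dyadic_above]) auto
  then show ?thesis
  proof eventually_elim
    case (elim n)
    have "t < dyadic_above n t" by (rule dyadic_above_bounds)
    with elim assms show ?case by (simp add: dyadic_approx_def)
  qed
qed

lemma dyadic_approx_from_right:
  assumes "t \<in> {0..<T}"
  shows "(\<lambda>n. dyadic_approx T n t) \<longlonglongrightarrow> t \<and> (\<forall>\<^sub>F n in sequentially. t < dyadic_approx T n t)"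
  using eventually_dyadic_approx_eq[OF assms]
  by (auto simp: tendsto_cong[OF eventually_dyadic_approx_eq[OF assms]] tendsto_dyadic_above
      dyadic_above_bounds elim: eventually_mono)

lemma countable_range_dyadic_approx: "countable (range (dyadic_approx T n))"
proof -
  have "range (dyadic_approx T n) \<subseteq> insert 0 (range (\<lambda>k::int. (of_int k + 1) / 2 ^ n))"
    by (auto simp: dyadic_approx_def dyadic_above_def)
  then show ?thesis by (rule countable_subset) auto
qed

lemma measurable_eval_dyadic_approx:
  assumes "T > 0" and eval: "\<And>c. c \<in> {0..<T} \<Longrightarrow> (\<lambda>\<gamma>. \<gamma> c) \<in> borel_measurable M"
  shows "(\<lambda>p. fst p (dyadic_approx T n (snd p))) \<in> borel_measurable (M \<Otimes>\<^sub>M lborel)"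
proof (rule measurable_compose_countable'[OF _ _ countable_range_dyadic_approx])
  show "(\<lambda>p. fst p c) \<in> borel_measurable (M \<Otimes>\<^sub>M lborel)" if "c \<in> range (dyadic_approx T n)" for c
    using that dyadic_approx_in[OF \<open>T > 0\<close>] eval by (auto intro: measurable_compose[OF measurable_fst])
  have [measurable]: "dyadic_approx T n \<in> borel_measurable borel"
    unfolding dyadic_approx_def dyadic_above_def by measurable
  show "(\<lambda>p. dyadic_approx T n (snd p)) \<in> M \<Otimes>\<^sub>M lborel \<rightarrow>\<^sub>M count_space (range (dyadic_approx T n))"
    unfolding measurable_count_space_eq_countable[OF countable_range_dyadic_approx]
  proof (intro conjI ballI)
    fix c
    have "{p \<in> space (M \<Otimes>\<^sub>M lborel). dyadic_approx T n (snd p) = c} \<in> sets (M \<Otimes>\<^sub>M lborel)"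
      by measurable
    then show "(\<lambda>p. dyadic_approx T n (snd p)) -` {c} \<inter> space (M \<Otimes>\<^sub>M lborel) \<in> sets (M \<Otimes>\<^sub>M lborel)"
      by (simp add: vimage_def Int_def conj_commute)
  qed auto
qed

definition dyadic_right_limit :: "real \<Rightarrow> (real \<Rightarrow> 'a::t2_space) \<Rightarrow> real \<Rightarrow> 'a" where
  "dyadic_right_limit T \<gamma> t = lim (\<lambda>n. \<gamma> (dyadic_approx T n t))"

lemma tendsto_dyadic_right_limit:
  fixes \<gamma> :: "real \<Rightarrow> 'a::banach"
  assumes "variation {0..T} \<gamma> < \<infinity>" "t \<in> {0..<T}"
  shows "(\<lambda>n. \<gamma> (dyadic_approx T n t)) \<longlonglongrightarrow> dyadic_right_limit T \<gamma> t"
proof -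
  have "Cauchy (\<lambda>n. \<gamma> (dyadic_approx T n t))"
    using assms dyadic_approx_in[of T] dyadic_approx_from_right[OF assms(2)]
    by (intro Cauchy_from_right_if_variation_finite) (auto simp: less_imp_le)
  then show ?thesis
    unfolding dyadic_right_limit_def by (simp add: Cauchy_convergent_iff convergent_LIMSEQ_iff)
qed

lemma AE_dyadic_right_limit_eq:
  fixes \<gamma> :: "real \<Rightarrow> 'a::banach"
  assumes "variation {0..T} \<gamma> < \<infinity>"
  shows "AE t in lborel. t \<in> {0..<T} \<longrightarrow> dyadic_right_limit T \<gamma> t = \<gamma> t"
proof -
  have "countable {t \<in> {0..<T}. \<not> (\<lambda>n. \<gamma> (dyadic_approx T n t)) \<longlonglongrightarrow> \<gamma> t}"
    using assms dyadic_approx_from_right by (rule countable_right_discontinuities_if_variation_finite)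
  then have "AE t in lborel. t \<notin> {t \<in> {0..<T}. \<not> (\<lambda>n. \<gamma> (dyadic_approx T n t)) \<longlonglongrightarrow> \<gamma> t}"
    by (intro AE_not_in countable_imp_null_set_lborel)
  then show ?thesis
    by eventually_elim (use LIMSEQ_unique tendsto_dyadic_right_limit[OF assms] in auto)
qed

lemma measurable_dyadic_right_limit:
  fixes M :: "(real \<Rightarrow> 'a::{banach, second_countable_topology}) measure"
  assumes "T > 0" and "\<And>c. c \<in> {0..<T} \<Longrightarrow> (\<lambda>\<gamma>. \<gamma> c) \<in> borel_measurable M"
  shows "(\<lambda>p. dyadic_right_limit T (fst p) (snd p)) \<in> borel_measurable (M \<Otimes>\<^sub>M lborel)"
  unfolding dyadic_right_limit_def
  by (intro borel_measurable_lim_metric measurable_eval_dyadic_approx[OF assms])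

section \<open>Curves whose time marginals are Lebesgue measure on moving sets\<close>

lemma open_superset_small_inter:
  fixes A E :: "'a::euclidean_space set"
  assumes A: "A \<in> sets lebesgue" and E: "E \<in> sets lebesgue"
    and null: "emeasure lebesgue (A \<inter> E) = 0" and e: "e > 0"
  obtains U where "open U" "A \<subseteq> U" "emeasure lebesgue (U \<inter> E) < ennreal e"
proof -
  have AE: "A \<inter> E \<in> sets lebesgue" and CE: "UNIV - E \<in> sets lebesgue" using A E by auto
  obtain U1 where U1: "open U1" "A \<inter> E \<subseteq> U1" "emeasure lebesgue (U1 - A \<inter> E) < ennreal (e / 2)"
    by (rule sets_lebesgue_outer_open[OF AE, of "e / 2"]) (use e in auto)
  obtain U2 where U2: "open U2" "UNIV - E \<subseteq> U2" "emeasure lebesgue (U2 - (UNIV - E)) < ennreal (e / 2)"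
    by (rule sets_lebesgue_outer_open[OF CE, of "e / 2"]) (use e in auto)
  have "emeasure lebesgue U1 \<le> emeasure lebesgue (U1 - A \<inter> E) + emeasure lebesgue (A \<inter> E)"
    using U1 AE by (intro order_trans[OF _ emeasure_subadditive] emeasure_mono) auto
  then have U1_small: "emeasure lebesgue U1 < ennreal (e / 2)" using U1(3) null by simp
  have U12: "U1 \<in> sets lebesgue" "U2 \<inter> E \<in> sets lebesgue" using U1(1) U2(1) E by auto
  have "emeasure lebesgue ((U1 \<union> U2) \<inter> E) \<le> emeasure lebesgue (U1 \<union> U2 \<inter> E)"
    using U12 by (intro emeasure_mono) auto
  also have "\<dots> \<le> emeasure lebesgue U1 + emeasure lebesgue (U2 \<inter> E)"
    using U12 by (rule emeasure_subadditive)
  also have "\<dots> < ennreal (e / 2) + ennreal (e / 2)"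
    using U1_small U2(3) by (intro add_strict_mono) (auto simp: Diff_eq)
  also have "\<dots> = ennreal e" using e by (simp flip: ennreal_plus)
  finally show ?thesis
    using U1(1,2) U2(1,2) by (intro that[of "U1 \<union> U2"]) auto
qed

lemma emeasure_Collect_in_eq_nn_integral:
  assumes "f \<in> borel_measurable M" "U \<in> sets borel"
  shows "emeasure M {x \<in> space M. f x \<in> U} = (\<integral>\<^sup>+x. indicator U (f x) \<partial>M)"
proof -
  have "{x \<in> space M. f x \<in> U} \<in> sets M" using assms by measurable
  then show ?thesis
    by (simp flip: nn_integral_indicator) (auto intro!: nn_integral_cong simp: indicator_def)
qed

locale lagrangian_marginals =
  fixes T :: real and \<omega> :: "(real \<Rightarrow> real \<times> real) measure" and E :: "real \<Rightarrow> (real \<times> real) set"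
  assumes T_pos: "T > 0"
    and variation_finite: "\<And>\<gamma>. \<gamma> \<in> space \<omega> \<Longrightarrow> variation {0..T} \<gamma> < \<infinity>"
    and measurable_eval: "\<And>c. c \<in> {0..<T} \<Longrightarrow> (\<lambda>\<gamma>. \<gamma> c) \<in> borel_measurable \<omega>"
    and marginal: "\<And>c A. c \<in> {0..<T} \<Longrightarrow> A \<in> sets borel \<Longrightarrow>
                     emeasure \<omega> {\<gamma> \<in> space \<omega>. \<gamma> c \<in> A} = emeasure lebesgue (A \<inter> E c)"
    and sets_E: "\<And>c. c \<in> {0..<T} \<Longrightarrow> E c \<in> sets lebesgue"
    and E_continuous: "\<And>t. t \<in> {0..<T} \<Longrightarrow>
                         ((\<lambda>s. emeasure lebesgue (E s - E t)) \<longlongrightarrow> 0) (at t within {0..<T})"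
begin

lemma sigma_finite: "sigma_finite_measure \<omega>"
proof
  have T0: "0 \<in> {0..<T}" using T_pos by simp
  note measurable_eval[OF T0, measurable]
  define A where "A = range (\<lambda>n::nat. {\<gamma> \<in> space \<omega>. \<gamma> 0 \<in> ball 0 (real n)})"
  have "\<Union>A = space \<omega>"
    by (auto simp: A_def dist_norm intro: reals_Archimedean2)
  moreover have "emeasure \<omega> a \<noteq> \<infinity>" if "a \<in> A" for a
  proof -
    from \<open>a \<in> A\<close> obtain n :: nat where a: "a = {\<gamma> \<in> space \<omega>. \<gamma> 0 \<in> ball 0 (real n)}"
      unfolding A_def by blast
    have "emeasure \<omega> a = emeasure lebesgue (ball 0 (real n) \<inter> E 0)"
      unfolding a by (rule marginal[OF T0]) auto
    also have "\<dots> \<le> emeasure lebesgue (ball (0::real \<times> real) (real n))"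
      using sets_E[OF T0] by (intro emeasure_mono) auto
    also have "\<dots> < \<infinity>" using emeasure_bounded_finite[of "ball (0::real \<times> real) (real n)"] by simp
    finally show ?thesis by simp
  qed
  ultimately show "\<exists>A. countable A \<and> A \<subseteq> sets \<omega> \<and> \<Union>A = space \<omega> \<and> (\<forall>a\<in>A. emeasure \<omega> a \<noteq> \<infinity>)"
    by (intro exI[of _ A]) (auto simp: A_def)
qed

lemma measurable_right_limit: "(\<lambda>\<gamma>. dyadic_right_limit T \<gamma> t) \<in> borel_measurable \<omega>"
proof -
  have "(\<lambda>\<gamma>. (\<gamma>, t)) \<in> measurable \<omega> (\<omega> \<Otimes>\<^sub>M lborel)" by measurable
  from measurable_compose[OF this measurable_dyadic_right_limit[OF T_pos measurable_eval]]
  show ?thesis by simp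
qed

lemma liminf_emeasure_inter_E_le:
  assumes t: "t \<in> {0..<T}" and U: "U \<in> sets lebesgue"
  shows "liminf (\<lambda>n. emeasure lebesgue (U \<inter> E (dyadic_approx T n t))) \<le> emeasure lebesgue (U \<inter> E t)"
proof -
  define s where "s = (\<lambda>n. dyadic_approx T n t)"
  have s: "s n \<in> {0..<T}" for n using dyadic_approx_in[OF T_pos] by (simp add: s_def)
  have "emeasure lebesgue (U \<inter> E (s n)) \<le> emeasure lebesgue (U \<inter> E t) + emeasure lebesgue (E (s n) - E t)"
    for n
  proof -
    have "emeasure lebesgue (U \<inter> E (s n)) \<le> emeasure lebesgue (U \<inter> E t \<union> (E (s n) - E t))"
      using sets_E[OF s] sets_E[OF t] U by (intro emeasure_mono sets.Un sets.Int sets.Diff) auto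
    also have "\<dots> \<le> emeasure lebesgue (U \<inter> E t) + emeasure lebesgue (E (s n) - E t)"
      using sets_E[OF s] sets_E[OF t] U by (intro emeasure_subadditive) auto
    finally show ?thesis .
  qed
  then have "liminf (\<lambda>n. emeasure lebesgue (U \<inter> E (s n)))
      \<le> liminf (\<lambda>n. emeasure lebesgue (U \<inter> E t) + emeasure lebesgue (E (s n) - E t))"
    by (intro Liminf_mono always_eventually allI)
  also have "\<dots> = emeasure lebesgue (U \<inter> E t)"
  proof (intro lim_imp_Liminf)
    have "filterlim s (at t within {0..<T}) sequentially"
      using dyadic_approx_from_right[OF t] s
      by (auto simp: s_def filterlim_at elim: eventually_mono)
    then have "(\<lambda>n. emeasure lebesgue (E (s n) - E t)) \<longlonglongrightarrow> 0"
      by (rule filterlim_compose[OF E_continuous[OF t]])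
    then show "(\<lambda>n. emeasure lebesgue (U \<inter> E t) + emeasure lebesgue (E (s n) - E t))
        \<longlonglongrightarrow> emeasure lebesgue (U \<inter> E t)"
      using tendsto_add[OF tendsto_const] by fastforce
  qed simp
  finally show ?thesis by (simp add: s_def)
qed

lemma emeasure_right_limit_in_open_le:
  assumes t: "t \<in> {0..<T}" and U: "open U"
  shows "emeasure \<omega> {\<gamma> \<in> space \<omega>. dyadic_right_limit T \<gamma> t \<in> U} \<le> emeasure lebesgue (U \<inter> E t)"
proof -
  define s where "s = (\<lambda>n. dyadic_approx T n t)"
  have s: "s n \<in> {0..<T}" for n using dyadic_approx_in[OF T_pos] by (simp add: s_def)
  have [measurable]: "U \<in> sets borel" using U by simp
  \<comment> \<open>The indicator of an open set is lower semicontinuous; then apply Fatou's lemma.\<close>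
  have "indicator U (dyadic_right_limit T \<gamma> t) \<le> liminf (\<lambda>n. indicator U (\<gamma> (s n)) :: ennreal)"
    if "\<gamma> \<in> space \<omega>" for \<gamma>
  proof (cases "dyadic_right_limit T \<gamma> t \<in> U")
    case True
    have "(\<lambda>n. \<gamma> (s n)) \<longlonglongrightarrow> dyadic_right_limit T \<gamma> t"
      unfolding s_def using variation_finite[OF that] t by (rule tendsto_dyadic_right_limit)
    then have "\<forall>\<^sub>F n in sequentially. \<gamma> (s n) \<in> U"
      using U True by (rule topological_tendstoD)
    then have "\<forall>\<^sub>F n in sequentially. (1::ennreal) \<le> indicator U (\<gamma> (s n))"
      by eventually_elim simp
    then show ?thesis using True by (simp add: Liminf_bounded)
  qed simp
  then have "emeasure \<omega> {\<gamma> \<in> space \<omega>. dyadic_right_limit T \<gamma> t \<in> U}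
      \<le> (\<integral>\<^sup>+\<gamma>. liminf (\<lambda>n. indicator U (\<gamma> (s n))) \<partial>\<omega>)"
    by (simp add: emeasure_Collect_in_eq_nn_integral measurable_right_limit nn_integral_mono)
  also have "\<dots> \<le> liminf (\<lambda>n. \<integral>\<^sup>+\<gamma>. indicator U (\<gamma> (s n)) \<partial>\<omega>)"
    using measurable_eval[OF s] by (intro nn_integral_liminf) measurable
  also have "\<dots> = liminf (\<lambda>n. emeasure lebesgue (U \<inter> E (s n)))"
    using measurable_eval[OF s] marginal[OF s]
    by (simp flip: emeasure_Collect_in_eq_nn_integral)
  also have "\<dots> \<le> emeasure lebesgue (U \<inter> E t)"
    unfolding s_def using t U by (intro liminf_emeasure_inter_E_le) auto
  finally show ?thesis .
qed

lemma AE_right_limit_notin: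
  assumes t: "t \<in> {0..<T}" and A: "A \<in> sets lebesgue" and null: "emeasure lebesgue (A \<inter> E t) = 0"
  shows "AE \<gamma> in \<omega>. dyadic_right_limit T \<gamma> t \<notin> A"
proof -
  have "\<forall>k::nat. \<exists>U. open U \<and> A \<subseteq> U \<and> emeasure lebesgue (U \<inter> E t) < ennreal (1 / real (Suc k))"
    using open_superset_small_inter[OF A sets_E[OF t] null]
    by (metis of_nat_0_less_iff zero_less_Suc zero_less_divide_1_iff)
  then obtain U where U: "\<And>k. open (U k)" "\<And>k. A \<subseteq> U k"
      "\<And>k. emeasure lebesgue (U k \<inter> E t) < ennreal (1 / real (Suc k))"
    by metis
  define N where "N = {\<gamma> \<in> space \<omega>. \<forall>k. dyadic_right_limit T \<gamma> t \<in> U k}"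
  have [measurable]: "U k \<in> sets borel" for k using U(1) by simp
  have N: "N \<in> sets \<omega>" unfolding N_def using measurable_right_limit by measurable
  have small: "emeasure \<omega> N \<le> ennreal (1 / real (Suc k))" for k
  proof -
    have "emeasure \<omega> N \<le> emeasure \<omega> {\<gamma> \<in> space \<omega>. dyadic_right_limit T \<gamma> t \<in> U k}"
      using measurable_right_limit by (intro emeasure_mono) (auto simp: N_def)
    also have "\<dots> \<le> emeasure lebesgue (U k \<inter> E t)"
      by (rule emeasure_right_limit_in_open_le[OF t U(1)])
    finally show ?thesis using U(3)[of k] by simp
  qed
  have "emeasure \<omega> N \<le> 0"
  proof (rule ennreal_le_epsilon)
    fix e :: real assume "0 < e"
    then obtain k where "1 / real (Suc k) < e" by (metis nat_approx_posE)
    then have "emeasure \<omega> N \<le> ennreal e"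
      using small[of k] by (meson ennreal_leI less_imp_le order_trans)
    then show "emeasure \<omega> N \<le> 0 + ennreal e" by simp
  qed
  then show ?thesis
    using N U(2) by (intro AE_I'[of N]) (auto simp: N_def)
qed

theorem AE_curves_avoid_null_slices:
  fixes B :: "(real \<times> (real \<times> real)) set"
  assumes B: "B \<in> sets borel"
    and null: "AE t in lborel. t \<in> {0..<T} \<longrightarrow> emeasure lebesgue (Pair t -` B \<inter> E t) = 0"
  shows "AE \<gamma> in \<omega>. AE t in lborel. t \<in> {0..<T} \<longrightarrow> (t, \<gamma> t) \<notin> B"
proof -
  interpret pair_sigma_finite \<omega> lborel
    by (simp add: pair_sigma_finite_def sigma_finite sigma_finite_lborel)
  define P where "P \<gamma> t \<longleftrightarrow> t \<in> {0..<T} \<longrightarrow> (t, dyadic_right_limit T \<gamma> t) \<notin> B" for \<gamma> t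
  note [measurable] = B borel_measurable_Pair measurable_dyadic_right_limit[OF T_pos measurable_eval]
  have P: "{x \<in> space (\<omega> \<Otimes>\<^sub>M lborel). P (fst x) (snd x)} \<in> sets (\<omega> \<Otimes>\<^sub>M lborel)"
    unfolding P_def by measurable
  have "AE t in lborel. AE \<gamma> in \<omega>. P \<gamma> t"
    using null
  proof eventually_elim
    case (elim t)
    have "(\<lambda>p::real \<times> real. (t, p)) \<in> borel_measurable borel"
      by (intro borel_measurable_continuous_onI continuous_intros)
    then have "Pair t -` B \<in> sets borel" using B by (rule measurable_sets_borel)
    then show ?case
      using elim AE_right_limit_notin[of t "Pair t -` B"] by (auto simp: P_def)
  qed
  then have "AE \<gamma> in \<omega>. AE t in lborel. P \<gamma> t"
    using AE_commute[OF P] by simp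
  then show ?thesis
    using AE_space
  proof eventually_elim
    case (elim \<gamma>)
    from elim(1) AE_dyadic_right_limit_eq[OF variation_finite[OF elim(2)]]
    show ?case by eventually_elim (auto simp: P_def)
  qed
qed

end

section \<open>Hypographs and epigraphs as vertical strips\<close>

lemma borel_measurable_fst_snd [measurable]:
  "(fst :: 'a::topological_space \<times> 'b::topological_space \<Rightarrow> 'a) \<in> borel_measurable borel"
  "(snd :: 'a::topological_space \<times> 'b::topological_space \<Rightarrow> 'b) \<in> borel_measurable borel"
  by (intro borel_measurable_continuous_onI continuous_intros)+

lemma lebesgue_measurable_obtain_borel:
  fixes g :: "real \<Rightarrow> real"
  assumes "g \<in> borel_measurable lebesgue"
  obtains g' N where "g' \<in> borel_measurable borel" "N \<in> null_sets lborel" "\<And>x. x \<notin> N \<Longrightarrow> g x = g' x"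
proof -
  obtain g' where g': "g' \<in> borel_measurable lborel" "AE x in lborel. g x = g' x"
    using completion_ex_borel_measurable_real[OF assms] by blast
  from g'(2) obtain N where "{x \<in> space lborel. g x \<noteq> g' x} \<subseteq> N" "N \<in> null_sets lborel"
    by (rule AE_E) (simp add: null_sets_def)
  with g'(1) show ?thesis by (intro that[of g' N]) auto
qed

lemma null_sets_Times_UNIV:
  fixes N :: "real set"
  assumes "N \<in> null_sets lborel"
  shows "N \<times> UNIV \<in> null_sets (lebesgue :: (real \<times> real) measure)"
proof -
  have "N \<times> (UNIV :: real set) \<in> null_sets (lborel \<Otimes>\<^sub>M lborel)"
    using assms by (intro lborel.times_in_null_sets1) auto
  then show ?thesis by (simp add: lborel_prod null_sets_completionI)
qed

definition vertical_strip :: "(real \<Rightarrow> real) \<Rightarrow> (real \<Rightarrow> real) \<Rightarrow> (real \<times> real) set" where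
  "vertical_strip a h = {(x, v). a x \<le> v \<and> v \<le> a x + h x}"

lemma emeasure_lborel_vertical_strip:
  assumes [measurable]: "a \<in> borel_measurable borel" "h \<in> borel_measurable borel"
  shows "vertical_strip a h \<in> sets borel"
    and "emeasure lborel (vertical_strip a h) = (\<integral>\<^sup>+x. ennreal (h x) \<partial>lborel)"
proof -
  show S: "vertical_strip a h \<in> sets borel"
    unfolding vertical_strip_def by measurable
  have "emeasure lborel (vertical_strip a h) = emeasure (lborel \<Otimes>\<^sub>M lborel) (vertical_strip a h)"
    by (simp only: lborel_prod)
  also have "\<dots> = (\<integral>\<^sup>+x. emeasure lborel (Pair x -` vertical_strip a h) \<partial>lborel)"
    using S by (intro lborel.emeasure_pair_measure_alt) (simp only: lborel_prod sets_lborel)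
  also have "\<dots> = (\<integral>\<^sup>+x. ennreal (h x) \<partial>lborel)"
  proof (intro nn_integral_cong)
    fix x
    have "Pair x -` vertical_strip a h = {a x .. a x + h x}" by (auto simp: vertical_strip_def)
    then show "emeasure lborel (Pair x -` vertical_strip a h) = ennreal (h x)"
      by (simp add: emeasure_lborel_Icc_eq ennreal_neg)
  qed
  finally show "emeasure lborel (vertical_strip a h) = (\<integral>\<^sup>+x. ennreal (h x) \<partial>lborel)" .
qed

lemma emeasure_lebesgue_vertical_strip:
  assumes a: "a \<in> borel_measurable lebesgue" and h: "h \<in> borel_measurable lebesgue"
  shows "vertical_strip a h \<in> sets lebesgue"
    and "emeasure lebesgue (vertical_strip a h) = (\<integral>\<^sup>+x. ennreal (h x) \<partial>lebesgue)"
proof -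
  obtain a' Na where a': "a' \<in> borel_measurable borel" "Na \<in> null_sets lborel" "\<And>x. x \<notin> Na \<Longrightarrow> a x = a' x"
    using lebesgue_measurable_obtain_borel[OF a] by blast
  obtain h' Nh where h': "h' \<in> borel_measurable borel" "Nh \<in> null_sets lborel" "\<And>x. x \<notin> Nh \<Longrightarrow> h x = h' x"
    using lebesgue_measurable_obtain_borel[OF h] by blast
  define Z where "Z = (Na \<union> Nh) \<times> (UNIV :: real set)"
  have Z: "Z \<in> null_sets lebesgue" unfolding Z_def using a'(2) h'(2) by (intro null_sets_Times_UNIV) auto
  have eq: "vertical_strip a h - Z = vertical_strip a' h' - Z"
    using a'(3) h'(3) by (auto simp: vertical_strip_def Z_def)
  have S': "vertical_strip a' h' \<in> sets borel"
    using emeasure_lborel_vertical_strip(1)[OF a'(1) h'(1)] .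
  have "vertical_strip a h = (vertical_strip a' h' - Z) \<union> (vertical_strip a h \<inter> Z)"
    using eq by blast
  moreover have "vertical_strip a h \<inter> Z \<in> null_sets lebesgue"
    using Z by (rule null_sets_completion_subset[rotated]) auto
  ultimately show S: "vertical_strip a h \<in> sets lebesgue"
    using S' Z by (metis null_setsD2 sets.Diff sets.Un sets_completionI_sets sets_lborel)
  have "emeasure lebesgue (vertical_strip a h) = emeasure lebesgue (vertical_strip a' h')"
    using emeasure_Diff_null_set[OF Z S] emeasure_Diff_null_set[OF Z] S' eq by simp
  also have "\<dots> = (\<integral>\<^sup>+x. ennreal (h' x) \<partial>lborel)"
    using S' emeasure_lborel_vertical_strip(2)[OF a'(1) h'(1)] by simp
  also have "\<dots> = (\<integral>\<^sup>+x. ennreal (h x) \<partial>lebesgue)"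
    using AE_not_in[OF h'(2)] h'(3)
    by (simp add: nn_integral_completion) (intro nn_integral_cong_AE, auto elim: eventually_mono)
  finally show "emeasure lebesgue (vertical_strip a h) = (\<integral>\<^sup>+x. ennreal (h x) \<partial>lebesgue)" .
qed

lemma null_sets_graph:
  fixes g :: "real \<Rightarrow> real"
  assumes "g \<in> borel_measurable lebesgue"
  shows "{(x, v). v = g x} \<in> null_sets lebesgue"
proof -
  have "{(x, v). v = g x} = vertical_strip g (\<lambda>_. 0)"
    by (auto simp: vertical_strip_def)
  then show ?thesis
    using emeasure_lebesgue_vertical_strip[OF assms, of "\<lambda>_. 0"] by (intro null_setsI) auto
qed

lemma hypo_eq_vertical_strip: "hypo g = vertical_strip (\<lambda>_. 0) (\<lambda>x. min 1 (g x))"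
  by (auto simp: hypo_def vertical_strip_def)

lemma epi_eq_vertical_strip: "epi g = vertical_strip (\<lambda>x. max 0 (g x)) (\<lambda>x. 1 - max 0 (g x))"
  by (auto simp: epi_def vertical_strip_def)

lemma sets_lebesgue_hypo_epi:
  assumes [measurable]: "g \<in> borel_measurable lebesgue"
  shows "hypo g \<in> sets lebesgue" "epi g \<in> sets lebesgue"
  unfolding hypo_eq_vertical_strip epi_eq_vertical_strip
  by (rule emeasure_lebesgue_vertical_strip; measurable)+

lemma hypo_epi_Diff_subset_vertical_strip:
  "hypo g1 - hypo g2 \<subseteq> vertical_strip (\<lambda>x. min (g1 x) (g2 x)) (\<lambda>x. \<bar>g1 x - g2 x\<bar>)"
  "epi g1 - epi g2 \<subseteq> vertical_strip (\<lambda>x. min (g1 x) (g2 x)) (\<lambda>x. \<bar>g1 x - g2 x\<bar>)"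
  by (auto simp: hypo_def epi_def vertical_strip_def)

lemma emeasure_Diff_tendsto_0:
  fixes u :: "real \<Rightarrow> real \<Rightarrow> real" and E :: "real \<Rightarrow> (real \<times> real) set" and S :: "real set"
  assumes integrable: "\<And>s. s \<in> S \<Longrightarrow> integrable lebesgue (u s)" and t: "t \<in> S"
    and L1_continuous: "((\<lambda>s. LINT x|lebesgue. \<bar>u s x - u t x\<bar>) \<longlongrightarrow> 0) (at t within S)"
    and strip: "\<And>s. E s - E t \<subseteq> vertical_strip (\<lambda>x. min (u s x) (u t x)) (\<lambda>x. \<bar>u s x - u t x\<bar>)"
  shows "((\<lambda>s. emeasure lebesgue (E s - E t)) \<longlongrightarrow> 0) (at t within S)"
proof (rule tendsto_sandwich[of "\<lambda>_. 0" _ _ "\<lambda>s. ennreal (LINT x|lebesgue. \<bar>u s x - u t x\<bar>)"])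
  have "emeasure lebesgue (E s - E t) \<le> ennreal (LINT x|lebesgue. \<bar>u s x - u t x\<bar>)" if "s \<in> S" for s
  proof -
    have [measurable]: "u s \<in> borel_measurable lebesgue" "u t \<in> borel_measurable lebesgue"
      using integrable that t by auto
    have "emeasure lebesgue (E s - E t)
        \<le> emeasure lebesgue (vertical_strip (\<lambda>x. min (u s x) (u t x)) (\<lambda>x. \<bar>u s x - u t x\<bar>))"
      by (intro emeasure_mono strip emeasure_lebesgue_vertical_strip(1)) measurable
    also have "\<dots> = (\<integral>\<^sup>+x. ennreal \<bar>u s x - u t x\<bar> \<partial>lebesgue)"
      by (rule emeasure_lebesgue_vertical_strip(2)) measurable
    also have "\<dots> = ennreal (LINT x|lebesgue. \<bar>u s x - u t x\<bar>)"
      using integrable that t by (intro nn_integral_eq_integral) auto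
    finally show ?thesis .
  qed
  then show "\<forall>\<^sub>F s in at t within S. emeasure lebesgue (E s - E t) \<le> ennreal (LINT x|lebesgue. \<bar>u s x - u t x\<bar>)"
    by (auto simp: eventually_at_filter)
  show "((\<lambda>s. ennreal (LINT x|lebesgue. \<bar>u s x - u t x\<bar>)) \<longlongrightarrow> 0) (at t within S)"
    using tendsto_ennrealI[OF L1_continuous] by simp
qed auto

section \<open>Lagrangian curves run through Lebesgue points\<close>

lemma lagrangian_marginals_if_lagrangian_rep:
  assumes rep: "lagrangian_rep T I E \<omega>" and I: "{0..<T} \<subseteq> I" and "T > 0"
    and "\<And>c. c \<in> {0..<T} \<Longrightarrow> E c \<in> sets lebesgue"
    and "\<And>t. t \<in> {0..<T} \<Longrightarrow> ((\<lambda>s. emeasure lebesgue (E s - E t)) \<longlongrightarrow> 0) (at t within {0..<T})"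
  shows "lagrangian_marginals T \<omega> E"
proof
  fix c and A :: "(real \<times> real) set" assume c: "c \<in> {0..<T}" and A: "A \<in> sets borel"
  have eval: "(\<lambda>\<gamma>. \<gamma> c) \<in> borel_measurable \<omega>"
    and distr: "emeasure (distr \<omega> lborel (\<lambda>\<gamma>. \<gamma> c)) A = emeasure lebesgue (A \<inter> E c)"
    using rep I c A by (auto simp: lagrangian_rep_def)
  have "{\<gamma> \<in> space \<omega>. \<gamma> c \<in> A} = (\<lambda>\<gamma>. \<gamma> c) -` A \<inter> space \<omega>" by auto
  with eval distr A show "emeasure \<omega> {\<gamma> \<in> space \<omega>. \<gamma> c \<in> A} = emeasure lebesgue (A \<inter> E c)"
    by (simp add: emeasure_distr)
qed (use assms in \<open>auto simp: lagrangian_rep_def Curves_def\<close>)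

lemma AE_Pair_vimage_null:
  assumes "N \<in> null_sets (lborel :: (real \<times> real) measure)"
  shows "AE t in lborel. Pair t -` N \<in> null_sets lborel"
proof -
  have N: "N \<in> null_sets (lborel \<Otimes>\<^sub>M lborel)" using assms by (simp only: lborel_prod)
  then have "AE t in lborel. AE x in lborel. (t, x) \<notin> N"
    by (intro lborel_pair.AE_pair AE_not_in)
  then show ?thesis
  proof eventually_elim
    case (elim t)
    have "Pair t -` N \<in> sets lborel" using N by (intro sets_Pair1) auto
    then show ?case using elim by (simp add: AE_iff_null_sets vimage_def)
  qed
qed

lemma lagrangian_marginals_if_C0_L1_Linfty:
  fixes u :: "real \<Rightarrow> real \<Rightarrow> real" and G :: "(real \<Rightarrow> real) \<Rightarrow> (real \<times> real) set"
  assumes "T > 0" and u: "C0_L1_Linfty T u"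
    and rep: "lagrangian_rep T I (\<lambda>t. G (u t)) \<omega>" and I: "{0..<T} \<subseteq> I"
    and G_sets: "\<And>g. g \<in> borel_measurable lebesgue \<Longrightarrow> G g \<in> sets lebesgue"
    and G_Diff: "\<And>g1 g2. G g1 - G g2 \<subseteq> vertical_strip (\<lambda>x. min (g1 x) (g2 x)) (\<lambda>x. \<bar>g1 x - g2 x\<bar>)"
  shows "lagrangian_marginals T \<omega> (\<lambda>t. G (u t))"
proof (rule lagrangian_marginals_if_lagrangian_rep[OF rep I \<open>T > 0\<close>])
  fix t assume t: "t \<in> {0..<T}"
  have integrable: "\<And>s. s \<in> {0..T} \<Longrightarrow> integrable lebesgue (u s)"
    and L1_continuous: "((\<lambda>s. LINT x|lebesgue. \<bar>u s x - u t x\<bar>) \<longlongrightarrow> 0) (at t within {0..T})"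
    using u t by (auto simp: C0_L1_Linfty_def)
  show "G (u t) \<in> sets lebesgue" using integrable t by (intro G_sets) auto
  show "((\<lambda>s. emeasure lebesgue (G (u s) - G (u t))) \<longlongrightarrow> 0) (at t within {0..<T})"
    using t integrable L1_continuous G_Diff
    by (intro emeasure_Diff_tendsto_0[where u=u]) (auto intro: tendsto_within_subset)
qed

lemma sets_borel_exceptional_set:
  fixes N :: "(real \<times> real) set" and ut :: "real \<times> real \<Rightarrow> real" and R :: "real \<Rightarrow> real \<Rightarrow> bool"
  assumes N: "N \<in> sets borel" and ut [measurable]: "ut \<in> borel_measurable borel"
    and R: "{(v, c). R v c} \<in> sets borel"
  shows "{(t, x, v). (t, x) \<in> N \<or> \<not> R v (ut (t, x))} \<in> sets borel"
proof -
  have pair1: "(\<lambda>q::real \<times> real \<times> real. (fst q, fst (snd q))) \<in> borel_measurable borel"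
    by (rule borel_measurable_Pair; measurable)
  have pair2: "(\<lambda>q::real \<times> real \<times> real. (snd (snd q), ut (fst q, fst (snd q)))) \<in> borel_measurable borel"
    by (rule borel_measurable_Pair; measurable)
  have "{(t, x, v). (t, x) \<in> N \<or> \<not> R v (ut (t, x))} = (\<lambda>q. (fst q, fst (snd q))) -` N \<union>
      - ((\<lambda>q. (snd (snd q), ut (fst q, fst (snd q)))) -` {(v, c). R v c})"
    by auto
  also have "\<dots> \<in> sets borel"
    using N R by (intro sets.Un borel_comp measurable_sets_borel[OF pair1] measurable_sets_borel[OF pair2]) auto
  finally show ?thesis .
qed

lemma null_sets_exceptional_slice:
  fixes g h :: "real \<Rightarrow> real" and S :: "(real \<times> real) set"
  assumes N: "N \<in> null_sets lborel" and g: "g \<in> borel_measurable lebesgue"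
    and h: "\<And>x. x \<notin> N \<Longrightarrow> h x = g x"
    and S: "\<And>x v. (x, v) \<in> S \<Longrightarrow> \<not> R v (g x) \<Longrightarrow> v = g x"
  shows "{(x, v) \<in> S. x \<in> N \<or> \<not> R v (h x)} \<in> null_sets lebesgue"
proof (rule null_sets_completion_subset)
  have "v = g x" if "(x, v) \<in> S" "x \<notin> N" "\<not> R v (h x)" for x v
    using that h S by metis
  then show "{(x, v) \<in> S. x \<in> N \<or> \<not> R v (h x)} \<subseteq> N \<times> UNIV \<union> {(x, v). v = g x}"
    by auto
  show "N \<times> UNIV \<union> {(x, v). v = g x} \<in> null_sets lebesgue"
    using null_sets_Times_UNIV[OF N] null_sets_graph[OF g] by auto
qed

theorem AE_lagrangian_curve_at_lebesgue_points:
  fixes u :: "real \<Rightarrow> real \<Rightarrow> real" and G :: "(real \<Rightarrow> real) \<Rightarrow> (real \<times> real) set"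
    and R :: "real \<Rightarrow> real \<Rightarrow> bool"
  assumes "T > 0" and u: "C0_L1_Linfty T u" and u01: "\<forall>t\<in>{0..T}. \<forall>x. 0 \<le> u t x \<and> u t x \<le> 1"
    and rep: "lagrangian_rep T I (\<lambda>t. G (u t)) \<omega>" and I: "{0..<T} \<subseteq> I"
    and G_sets: "\<And>g. g \<in> borel_measurable lebesgue \<Longrightarrow> G g \<in> sets lebesgue"
    and G_Diff: "\<And>g1 g2. G g1 - G g2 \<subseteq> vertical_strip (\<lambda>x. min (g1 x) (g2 x)) (\<lambda>x. \<bar>g1 x - g2 x\<bar>)"
    and G_graph: "\<And>g x v. (x, v) \<in> G g \<Longrightarrow> \<not> R v (g x) \<Longrightarrow> v = g x"
    and R: "{(v, c). R v c} \<in> sets borel"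
  shows "AE \<gamma> in \<omega>. AE t in lborel. t \<in> {0..T} \<longrightarrow>
           (\<exists>c. lebesgue_point u (t, fst (\<gamma> t)) c \<and> R (snd (\<gamma> t)) c)"
proof -
  have meas: "set_borel_measurable lebesgue ({0..T} \<times> UNIV) (\<lambda>p. u (fst p) (snd p))"
    and integrable: "\<And>t. t \<in> {0..T} \<Longrightarrow> integrable lebesgue (u t)"
    using u by (auto simp: C0_L1_Linfty_def)
  obtain N ut where N: "N \<in> null_sets lborel" and ut: "ut \<in> borel_measurable borel"
    and good: "\<And>t x. t \<in> {0<..<T} \<Longrightarrow> (t, x) \<notin> N \<Longrightarrow> lebesgue_point u (t, x) (u t x) \<and> ut (t, x) = u t x"
    using obtain_borel_lebesgue_points[OF meas u01] by blast
  have marginals: "lagrangian_marginals T \<omega> (\<lambda>t. G (u t))"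
    using assms by (intro lagrangian_marginals_if_C0_L1_Linfty)
  have endpoints: "AE t in lborel. t \<notin> {0, T}"
    by (intro AE_not_in finite_imp_null_set_lborel) auto
  \<comment> \<open>A curve avoiding B at a time \<open>t \<in> {0<..<T}\<close> sits at a Lebesgue point, and R relates its
    velocity to the value of u there. Using the Borel version \<open>ut\<close> of u makes B Borel.\<close>
  define B where "B = {(t, x, v). (t, x) \<in> N \<or> \<not> R v (ut (t, x))}"
  have "B \<in> sets borel"
    unfolding B_def using N ut R by (intro sets_borel_exceptional_set) auto
  moreover have "AE t in lborel. t \<in> {0..<T} \<longrightarrow> emeasure lebesgue (Pair t -` B \<inter> G (u t)) = 0"
    using AE_Pair_vimage_null[OF N] endpoints
  proof eventually_elim
    case (elim t)
    show ?case
    proof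
      assume "t \<in> {0..<T}"
      with elim have t: "t \<in> {0<..<T}" by auto
      have "Pair t -` B \<inter> G (u t) = {(x, v) \<in> G (u t). x \<in> Pair t -` N \<or> \<not> R v (ut (t, x))}"
        by (auto simp: B_def)
      also have "\<dots> \<in> null_sets lebesgue"
        using elim(1) integrable[of t] t good[OF t] G_graph
        by (intro null_sets_exceptional_slice[where g = "u t"]) auto
      finally show "emeasure lebesgue (Pair t -` B \<inter> G (u t)) = 0" by auto
    qed
  qed
  ultimately have "AE \<gamma> in \<omega>. AE t in lborel. t \<in> {0..<T} \<longrightarrow> (t, \<gamma> t) \<notin> B"
    by (rule lagrangian_marginals.AE_curves_avoid_null_slices[OF marginals])
  then show ?thesis
  proof (rule eventually_mono)
    fix \<gamma> assume "AE t in lborel. t \<in> {0..<T} \<longrightarrow> (t, \<gamma> t) \<notin> B"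
    with endpoints show "AE t in lborel. t \<in> {0..T} \<longrightarrow> (\<exists>c. lebesgue_point u (t, fst (\<gamma> t)) c \<and> R (snd (\<gamma> t)) c)"
    proof eventually_elim
      case (elim t)
      show ?case
      proof
        assume "t \<in> {0..T}"
        with elim(1) have t: "t \<in> {0<..<T}" by auto
        from elim(2) t have "(t, fst (\<gamma> t)) \<notin> N" "R (snd (\<gamma> t)) (ut (t, fst (\<gamma> t)))"
          by (auto simp: B_def case_prod_unfold)
        with good[OF t] show "\<exists>c. lebesgue_point u (t, fst (\<gamma> t)) c \<and> R (snd (\<gamma> t)) c"
          by auto
      qed
    qed
  qed
qed

theorem lemma2p3:
  fixes T :: real and u :: "real \<Rightarrow> real \<Rightarrow> real"
    and \<omega>h \<omega>e :: "(real \<Rightarrow> real \<times> real) measure"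
  assumes "T > 0"
    and "bounded_weak_sol_fep T u"
    and "\<forall>t\<in>{0..T}. \<forall>x. 0 \<le> u t x \<and> u t x \<le> 1"
    and "lagrangian_rep_hypo T u \<omega>h"
    and "lagrangian_rep_epi T u \<omega>e"
  shows "(AE \<gamma> in \<omega>h. AE t in lborel. t \<in> {0..T} \<longrightarrow>
            (\<exists>c. lebesgue_point u (t, fst (\<gamma> t)) c \<and> snd (\<gamma> t) < c))
       \<and> (AE \<gamma> in \<omega>e. AE t in lborel. t \<in> {0..T} \<longrightarrow>
            (\<exists>c. lebesgue_point u (t, fst (\<gamma> t)) c \<and> snd (\<gamma> t) > c))"
proof
  have u: "C0_L1_Linfty T u"
    using assms(2) by (simp add: bounded_weak_sol_fep_def)
  show "AE \<gamma> in \<omega>h. AE t in lborel. t \<in> {0..T} \<longrightarrow>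
      (\<exists>c. lebesgue_point u (t, fst (\<gamma> t)) c \<and> snd (\<gamma> t) < c)"
    using assms(4) unfolding lagrangian_rep_hypo_def
  proof (rule AE_lagrangian_curve_at_lebesgue_points[OF assms(1) u assms(3), where R = "(<)"])
    show "v = g x" if "(x, v) \<in> hypo g" "\<not> v < g x" for g x v
      using that by (simp add: hypo_def)
  qed (auto simp: sets_lebesgue_hypo_epi hypo_epi_Diff_subset_vertical_strip)
  show "AE \<gamma> in \<omega>e. AE t in lborel. t \<in> {0..T} \<longrightarrow>
      (\<exists>c. lebesgue_point u (t, fst (\<gamma> t)) c \<and> snd (\<gamma> t) > c)"
    using assms(5) unfolding lagrangian_rep_epi_def
  proof (rule AE_lagrangian_curve_at_lebesgue_points[OF assms(1) u assms(3), where R = "\<lambda>v c. c < v"])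
    show "v = g x" if "(x, v) \<in> epi g" "\<not> g x < v" for g x v
      using that by (simp add: epi_def)
  qed (auto simp: sets_lebesgue_hypo_epi hypo_epi_Diff_subset_vertical_strip)
qed

end
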